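(* Let $(\mathbb{K},\partial)$ be a differential field with field of constants $C$ (algebraically closed, characteristic zero), let $L\in\mathbb{K}[\partial]$ be of order $n$ in normal form, and let $\mathcal{G}=\{G_0=1,G_1,\ldots,G_{t-1}\}$ be a Goodearl basis of $\mathcal{C}(L)$ as a $C[L]$-module. Assign weights $w(\lambda)=n$, $w(\mu_i)=\mathrm{ord}(G_i)$, and to a monomial $\lambda^k\mu_1^{\alpha_1}\cdots\mu_{t-1}^{\alpha_{t-1}}$ the weight $kn+\sum_i\alpha_i\mathrm{ord}(G_i)$. Then for every positive integer $W$ there is at most one monomial in $\lambda,\mu_1,\ldots,\mu_{t-1}$ that is linear in $\mu_1,\ldots,\mu_{t-1}$ (i.e. of the form $\lambda^k$ or $\lambda^k\mu_i$) and has weight $W$.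
   Context: $\mathcal{C}(L)=\{A\in\mathbb{K}[\partial]:LA=AL\}$. A Goodearl basis is a $C[L]$-module basis $\{G_0=1,\ldots,G_{t-1}\}$ of $\mathcal{C}(L)$ in which each $G_k$ has minimal order among $Q\in\mathcal{C}(L)$ with $\mathrm{ord}(Q)\equiv\mathrm{ord}(G_k)\pmod n$, and the classes $\mathrm{ord}(G_k)\bmod n$ are pairwise distinct and exhaust the classes mod $n$ of orders of elements of $\mathcal{C}(L)$. The weight of a monomial $M$ equals $\mathrm{ord}(\phi_L(M))$ where $\phi_L(\lambda)=L$, $\phi_L(\mu_i)=G_i$. *)

theory Defs
  imports "HOL-Computational_Algebra.Polynomial"
begin

definition derivation :: "('a::field \<Rightarrow> 'a) \<Rightarrow> bool" where
  "derivation D \<longleftrightarrow> (\<forall>x y. D (x + y) = D x + D y) \<and> (\<forall>x y. D (x * y) = x * D y + D x * y)"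

definition constants :: "('a::field \<Rightarrow> 'a) \<Rightarrow> 'a set" where
  "constants D = {c. D c = 0}"

definition alg_closed_constants :: "('a::field \<Rightarrow> 'a) \<Rightarrow> bool" where
  "alg_closed_constants D \<longleftrightarrow>
     (\<forall>p::'a poly. (\<forall>i. coeff p i \<in> constants D) \<and> degree p \<ge> 1 \<longrightarrow>
        (\<exists>c \<in> constants D. poly p c = 0))"

text \<open>Differential operators in K[\<partial>] are represented by their coefficient polynomial:
  the operator sum a_i \<partial>^i is the polynomial with coeff i = a_i.
  Addition is polynomial addition; multiplication obeys \<partial> a = a \<partial> + D a.\<close>

definition dleft :: "('a::field \<Rightarrow> 'a) \<Rightarrow> 'a poly \<Rightarrow> 'a poly" where
  "dleft D Q = pCons 0 Q + Abs_poly (\<lambda>j. D (coeff Q j))"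

definition opmul :: "('a::field \<Rightarrow> 'a) \<Rightarrow> 'a poly \<Rightarrow> 'a poly \<Rightarrow> 'a poly" where
  "opmul D P Q = (\<Sum>i\<le>degree P. smult (coeff P i) ((dleft D ^^ i) Q))"

abbreviation ord :: "'a::zero poly \<Rightarrow> nat" where
  "ord P \<equiv> degree P"

definition normal_form :: "'a::field poly \<Rightarrow> bool" where
  "normal_form L \<longleftrightarrow> degree L \<ge> 1 \<and> lead_coeff L = 1 \<and> coeff L (degree L - 1) = 0"

definition centralizer :: "('a::field \<Rightarrow> 'a) \<Rightarrow> 'a poly \<Rightarrow> 'a poly set" where
  "centralizer D L = {A. opmul D L A = opmul D A L}"

definition oppow :: "('a::field \<Rightarrow> 'a) \<Rightarrow> 'a poly \<Rightarrow> nat \<Rightarrow> 'a poly" where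
  "oppow D L k = (opmul D L ^^ k) 1"

definition eval_at_op :: "('a::field \<Rightarrow> 'a) \<Rightarrow> 'a poly \<Rightarrow> 'a poly \<Rightarrow> 'a poly" where
  "eval_at_op D p L = (\<Sum>k\<le>degree p. smult (coeff p k) (oppow D L k))"

definition module_basis :: "('a::field \<Rightarrow> 'a) \<Rightarrow> 'a poly \<Rightarrow> (nat \<Rightarrow> 'a poly) \<Rightarrow> nat \<Rightarrow> bool" where
  "module_basis D L G t \<longleftrightarrow>
     (\<forall>i<t. G i \<in> centralizer D L) \<and>
     (\<forall>A \<in> centralizer D L. \<exists>!ps :: nat \<Rightarrow> 'a poly.
        (\<forall>i. \<forall>j. coeff (ps i) j \<in> constants D) \<and> (\<forall>i\<ge>t. ps i = 0) \<and>
        A = (\<Sum>i<t. opmul D (eval_at_op D (ps i) L) (G i)))"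

definition goodearl_basis :: "('a::field \<Rightarrow> 'a) \<Rightarrow> 'a poly \<Rightarrow> (nat \<Rightarrow> 'a poly) \<Rightarrow> nat \<Rightarrow> bool" where
  "goodearl_basis D L G t \<longleftrightarrow>
     t \<ge> 1 \<and> G 0 = 1 \<and> module_basis D L G t \<and>
     (\<forall>k<t. \<forall>Q \<in> centralizer D L. Q \<noteq> 0 \<and> ord Q mod ord L = ord (G k) mod ord L
              \<longrightarrow> ord (G k) \<le> ord Q) \<and>
     (\<forall>i<t. \<forall>j<t. i \<noteq> j \<longrightarrow> ord (G i) mod ord L \<noteq> ord (G j) mod ord L) \<and>
     {ord Q mod ord L | Q. Q \<in> centralizer D L \<and> Q \<noteq> 0} = {ord (G i) mod ord L | i. i < t}"

text \<open>Monomials linear in mu_1..mu_(t-1): (k, None) is lambda^k, (k, Some i) is lambda^k mu_i.\<close>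
definition linear_monomials :: "nat \<Rightarrow> (nat \<times> nat option) set" where
  "linear_monomials t = {(k, None) | k. True} \<union> {(k, Some i) | k i. 1 \<le> i \<and> i < t}"

definition weight :: "nat \<Rightarrow> (nat \<Rightarrow> 'a::zero poly) \<Rightarrow> nat \<times> nat option \<Rightarrow> nat" where
  "weight n G m = fst m * n + (case snd m of None \<Rightarrow> 0 | Some i \<Rightarrow> ord (G i))"

end

theory Submission
  imports Defs
begin

text \<open>Reading \<open>\<lambda>\<^sup>k\<close> as \<open>\<lambda>\<^sup>k \<mu>\<^sub>0\<close> with \<open>G\<^sub>0 = 1\<close>, a linear monomial \<open>\<lambda>\<^sup>k \<mu>\<^sub>i\<close> has weight
  \<open>k n + ord G\<^sub>i\<close>. The orders of the Goodearl basis elements are pairwise distinct modulo \<open>n\<close>,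
  so the residue of the weight modulo \<open>n\<close> determines \<open>i\<close>, and then its quotient determines \<open>k\<close>.\<close>

definition monomial_index :: "nat \<times> nat option \<Rightarrow> nat" where
  "monomial_index m = (case snd m of None \<Rightarrow> 0 | Some i \<Rightarrow> i)"

lemma weight_eq_monomial_index:
  assumes "G 0 = 1"
  shows "weight n G m = fst m * n + ord (G (monomial_index m))"
  using assms unfolding weight_def monomial_index_def by (cases "snd m") auto

lemma monomial_index_less:
  assumes "t \<ge> 1" and "m \<in> linear_monomials t"
  shows "monomial_index m < t"
  using assms unfolding linear_monomials_def monomial_index_def by auto

lemma inj_on_exponent_monomial_index:
  "inj_on (\<lambda>m. (fst m, monomial_index m)) (linear_monomials t)"
  unfolding inj_on_def linear_monomials_def monomial_index_def by auto

lemma inj_on_mult_add_residue: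
  fixes n :: nat
  assumes "0 < n" and "inj_on (\<lambda>i. f i mod n) I"
  shows "inj_on (\<lambda>(k, i). k * n + f i) (UNIV \<times> I)"
proof (rule inj_onI, clarify)
  fix k i k' i'
  assume "i \<in> I" "i' \<in> I" and eq: "k * n + f i = k' * n + f i'"
  then have "f i mod n = f i' mod n"
    by (metis mod_mult_self3)
  with \<open>i \<in> I\<close> \<open>i' \<in> I\<close> assms(2) have "i = i'"
    by (auto dest: inj_onD)
  with eq assms(1) show "k = k' \<and> i = i'"
    by simp
qed

lemma inj_on_weight_linear_monomials:
  assumes "0 < n" and "G 0 = 1" and "t \<ge> 1"
    and "inj_on (\<lambda>i. ord (G i) mod n) {..<t}"
  shows "inj_on (weight n G) (linear_monomials t)"
proof -
  have "weight n G = (\<lambda>(k, i). k * n + ord (G i)) \<circ> (\<lambda>m. (fst m, monomial_index m))"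
    using assms(2) by (auto simp: weight_eq_monomial_index)
  moreover have "(\<lambda>m. (fst m, monomial_index m)) ` linear_monomials t \<subseteq> UNIV \<times> {..<t}"
    using assms(3) monomial_index_less by auto
  then have "inj_on (\<lambda>(k, i). k * n + ord (G i))
      ((\<lambda>m. (fst m, monomial_index m)) ` linear_monomials t)"
    by (rule inj_on_subset[OF inj_on_mult_add_residue[OF assms(1,4)]])
  ultimately show ?thesis
    by (simp only: comp_inj_on inj_on_exponent_monomial_index)
qed

theorem lemma6p2:
  fixes D :: "'a::field_char_0 \<Rightarrow> 'a" and L :: "'a poly" and G :: "nat \<Rightarrow> 'a poly"
    and t :: nat
  assumes "derivation D"
    and "alg_closed_constants D"
    and "normal_form L"
    and "goodearl_basis D L G t"
  shows "\<forall>W::nat. W > 0 \<longrightarrow>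
           (\<forall>m1 \<in> linear_monomials t. \<forall>m2 \<in> linear_monomials t.
              weight (ord L) G m1 = W \<longrightarrow> weight (ord L) G m2 = W \<longrightarrow> m1 = m2)"
proof -
  have "0 < ord L"
    using assms(3) unfolding normal_form_def by simp
  moreover have "G 0 = 1" "t \<ge> 1" "inj_on (\<lambda>i. ord (G i) mod ord L) {..<t}"
    using assms(4) unfolding goodearl_basis_def inj_on_def by auto
  ultimately have "inj_on (weight (ord L) G) (linear_monomials t)"
    by (rule inj_on_weight_linear_monomials)
  then show ?thesis
    by (auto dest: inj_onD)
qed

end
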